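(* Let $H_1$ and $H_2$ be finitely generated groups such that $H_2$ is infinite and does not have uniform exponential growth. Then for any constants $\alpha,\beta>0$ there exists a finite generating set $U$ of $H_1\times H_2$ such that $|U^n|<(\alpha|U|)^{\beta n}$ for some $n\in\mathbb{N}$.
   Context: For a finitely generated group $G$ and finite generating set $S$, $B_S(n)$ is the ball of radius $n$ about the identity in the word metric of $S$, $\omega(G,S)=\lim_{n\to\infty}|B_S(n)|^{1/n}$ and $\omega(G)=\inf_S\omega(G,S)$ over finite generating sets; $G$ has uniform exponential growth if $\omega(G)>1$. $U^n=\{u_1\cdots u_n:u_i\in U\}$. *)

theory Defs
  imports "HOL-Analysis.Analysis" "HOL-Algebra.Algebra"
begin

fun set_pow :: "('a, 'b) monoid_scheme \<Rightarrow> 'a set \<Rightarrow> nat \<Rightarrow> 'a set" where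
  "set_pow G U 0 = {\<one>\<^bsub>G\<^esub>}"
| "set_pow G U (Suc n) = set_mult G (set_pow G U n) U"

definition fin_gen_set :: "('a, 'b) monoid_scheme \<Rightarrow> 'a set \<Rightarrow> bool" where
  "fin_gen_set G S \<longleftrightarrow> finite S \<and> S \<subseteq> carrier G \<and> generate G S = carrier G"

definition finitely_generated :: "('a, 'b) monoid_scheme \<Rightarrow> bool" where
  "finitely_generated G \<longleftrightarrow> (\<exists>S. fin_gen_set G S)"

text \<open>Ball of radius n in the word metric of S: products of at most n elements of S \<union> S^-1.\<close>
definition word_ball :: "('a, 'b) monoid_scheme \<Rightarrow> 'a set \<Rightarrow> nat \<Rightarrow> 'a set" where
  "word_ball G S n = set_pow G (insert \<one>\<^bsub>G\<^esub> (S \<union> (\<lambda>s. inv\<^bsub>G\<^esub> s) ` S)) n"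

definition growth_rate :: "('a, 'b) monoid_scheme \<Rightarrow> 'a set \<Rightarrow> real" where
  "growth_rate G S = lim (\<lambda>n. real (card (word_ball G S n)) powr (1 / real n))"

definition min_growth_rate :: "('a, 'b) monoid_scheme \<Rightarrow> real" where
  "min_growth_rate G = Inf {growth_rate G S | S. fin_gen_set G S}"

definition uniform_exp_growth :: "('a, 'b) monoid_scheme \<Rightarrow> bool" where
  "uniform_exp_growth G \<longleftrightarrow> min_growth_rate G > 1"

end

theory Submission
  imports Defs
begin

text \<open>The sizes of word balls are submultiplicative, so by Fekete's lemma the growth rate is a
  genuine limit. If \<open>H\<^sub>2\<close> has no uniform exponential growth, then for any \<open>m\<close> it has a
  generating set \<open>S\<close> whose balls satisfy \<open>|B\<^sub>S(mn)| < 2\<^sup>n\<close> for some \<open>n\<close>. Take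
  \<open>U = W \<times> B\<^sub>S(m)\<close> with \<open>W\<close> a generating set of \<open>H\<^sub>1\<close> containing \<open>1\<close>: then
  \<open>U\<^sup>n = W\<^sup>n \<times> B\<^sub>S(mn)\<close> has fewer than \<open>(2|W|)\<^sup>n\<close> elements, while \<open>|U| \<ge> m + 1\<close> because the balls
  of an infinite group grow strictly. Choosing \<open>m\<close> large makes \<open>(\<alpha>|U|)\<^sup>\<beta>\<close> exceed \<open>2|W|\<close>.\<close>

lemma subadditive_mult_le:
  fixes b :: "nat \<Rightarrow> real"
  assumes subadd: "\<And>m n. b (m + n) \<le> b m + b n" and "b 0 = 0"
  shows "b (q * k) \<le> real q * b k"
proof (induction q)
  case (Suc q)
  have "b (Suc q * k) \<le> b k + b (q * k)" using subadd[of k "q * k"] by simp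
  with Suc show ?case by (simp add: algebra_simps)
qed (use assms(2) in simp)

lemma subadditive_div_le:
  fixes b :: "nat \<Rightarrow> real"
  assumes nonneg: "\<And>n. 0 \<le> b n" and subadd: "\<And>m n. b (m + n) \<le> b m + b n" and b0: "b 0 = 0"
    and "k \<ge> 1" and "n \<ge> 1"
  shows "b n / n \<le> b k / k + k * b 1 / n"
proof -
  have "b n \<le> b (n div k * k) + b (n mod k)"
    using subadd[of "n div k * k" "n mod k"] by simp
  also have "\<dots> \<le> real (n div k) * b k + real (n mod k) * b 1"
    using subadditive_mult_le[OF subadd b0, of "n div k" k] subadditive_mult_le[OF subadd b0, of "n mod k" 1]
    by simp
  also have "\<dots> \<le> (n / k) * b k + k * b 1"
  proof (intro add_mono mult_right_mono)
    show "real (n div k) \<le> n / k" by (rule of_nat_div_le_of_nat)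
    show "real (n mod k) \<le> k" using \<open>k \<ge> 1\<close> by (simp add: less_imp_le)
  qed (use nonneg in auto)
  finally show ?thesis using \<open>n \<ge> 1\<close> \<open>k \<ge> 1\<close> by (simp add: field_simps)
qed

lemma tendsto_subadditive_div_Inf:
  fixes b :: "nat \<Rightarrow> real"
  assumes nonneg: "\<And>n. 0 \<le> b n" and subadd: "\<And>m n. b (m + n) \<le> b m + b n" and b0: "b 0 = 0"
  shows "(\<lambda>n. b n / n) \<longlonglongrightarrow> (INF n\<in>{1..}. b n / n)" (is "_ \<longlonglongrightarrow> ?L")
proof (rule LIMSEQ_I)
  fix r :: real assume "r > 0"
  have bdd: "bdd_below ((\<lambda>n. b n / n) ` {1..})" using nonneg by (intro bdd_belowI2[of _ 0]) auto
  obtain k where k: "k \<ge> 1" "b k / k < ?L + r / 2"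
    using cInf_lessD[of "(\<lambda>n. b n / n) ` {1..}" "?L + r / 2"] \<open>r > 0\<close> by auto
  obtain N :: nat where N: "N > 2 * k * b 1 / r" using reals_Archimedean2 by blast
  have "\<bar>b n / n - ?L\<bar> < r" if n: "n \<ge> max 1 N" for n
  proof -
    have "?L \<le> b n / n" using n bdd by (intro cINF_lower) auto
    moreover have "k * b 1 / n < r / 2"
    proof -
      have "2 * k * b 1 / r < n" using N n by (simp add: less_le_trans)
      then show ?thesis using n \<open>r > 0\<close> by (simp add: field_simps)
    qed
    moreover have "b n / n \<le> b k / k + k * b 1 / n"
      using subadditive_div_le[OF nonneg subadd b0 k(1)] n by simp
    ultimately show ?thesis using k(2) unfolding abs_less_iff by linarith
  qed
  then show "\<exists>no. \<forall>n\<ge>no. norm (b n / n - ?L) < r" by (metis real_norm_def)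
qed

lemma card_set_mult_le:
  assumes "finite A" "finite B"
  shows "card (set_mult G A B) \<le> card A * card B"
proof -
  have "set_mult G A B = (\<lambda>(a, b). a \<otimes>\<^bsub>G\<^esub> b) ` (A \<times> B)"
    unfolding set_mult_def by force
  then show ?thesis
    using card_image_le[of "A \<times> B" "\<lambda>(a, b). a \<otimes>\<^bsub>G\<^esub> b"] assms by (simp add: card_cartesian_product)
qed

lemma finite_set_mult: "finite A \<Longrightarrow> finite B \<Longrightarrow> finite (set_mult G A B)"
  unfolding set_mult_def by simp

lemma finite_set_pow: "finite V \<Longrightarrow> finite (set_pow G V n)"
  by (induction n) (simp_all add: finite_set_mult)

lemma card_set_pow_le:
  assumes "finite V"
  shows "card (set_pow G V n) \<le> card V ^ n"
proof (induction n)
  case (Suc n)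
  have "card (set_pow G V (Suc n)) \<le> card (set_pow G V n) * card V"
    using card_set_mult_le[OF finite_set_pow[OF assms] assms] by simp
  also have "\<dots> \<le> card V ^ Suc n" using Suc by simp
  finally show ?case .
qed simp

lemma set_mult_DirProd:
  "set_mult (G \<times>\<times> H) (A \<times> B) (C \<times> D) = set_mult G A C \<times> set_mult H B D"
  unfolding set_mult_def by force

lemma set_pow_DirProd:
  "set_pow (G \<times>\<times> H) (A \<times> B) n = set_pow G A n \<times> set_pow H B n"
  by (induction n) (simp_all add: set_mult_DirProd)

context monoid
begin

lemma set_pow_carrier: "V \<subseteq> carrier G \<Longrightarrow> set_pow G V n \<subseteq> carrier G"
  by (induction n) (simp_all add: set_mult_closed)

lemma one_in_set_pow: "\<one> \<in> V \<Longrightarrow> \<one> \<in> set_pow G V n"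
  by (induction n) (auto simp: set_mult_def intro!: bexI[of _ \<one>])

lemma set_pow_1: "V \<subseteq> carrier G \<Longrightarrow> set_pow G V 1 = V"
  unfolding One_nat_def set_pow.simps set_mult_def by force

lemma set_pow_Suc_mono:
  assumes "\<one> \<in> V" "V \<subseteq> carrier G"
  shows "set_pow G V n \<subseteq> set_pow G V (Suc n)"
proof
  fix x assume "x \<in> set_pow G V n"
  moreover have "x = x \<otimes> \<one>" using set_pow_carrier[OF assms(2)] \<open>x \<in> set_pow G V n\<close> by (metis r_one subsetD)
  ultimately show "x \<in> set_pow G V (Suc n)" using assms(1) unfolding set_pow.simps set_mult_def by blast
qed

lemma set_pow_mono: "\<one> \<in> V \<Longrightarrow> V \<subseteq> carrier G \<Longrightarrow> m \<le> n \<Longrightarrow> set_pow G V m \<subseteq> set_pow G V n"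
  using lift_Suc_mono_le[of "set_pow G V"] set_pow_Suc_mono by blast

end

context group
begin

lemma set_pow_add: "V \<subseteq> carrier G \<Longrightarrow> set_pow G V (m + n) = set_pow G V m <#> set_pow G V n"
proof (induction n)
  case 0
  then show ?case using set_pow_carrier[OF 0] unfolding set_mult_def by force
next
  case (Suc n)
  then show ?case using set_mult_assoc[OF set_pow_carrier set_pow_carrier] by simp
qed

lemma set_pow_set_pow: "V \<subseteq> carrier G \<Longrightarrow> set_pow G (set_pow G V m) n = set_pow G V (m * n)"
  by (induction n) (simp_all add: set_pow_add[symmetric] add.commute)

end

definition word_gens :: "('a, 'b) monoid_scheme \<Rightarrow> 'a set \<Rightarrow> 'a set" where
  "word_gens G S = insert \<one>\<^bsub>G\<^esub> (S \<union> (\<lambda>s. inv\<^bsub>G\<^esub> s) ` S)"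

lemma word_ball_eq_set_pow: "word_ball G S n = set_pow G (word_gens G S) n"
  unfolding word_ball_def word_gens_def ..

lemma finite_word_ball: "finite S \<Longrightarrow> finite (word_ball G S n)"
  unfolding word_ball_eq_set_pow word_gens_def by (simp add: finite_set_pow)

context group
begin

lemma word_gens_carrier: "S \<subseteq> carrier G \<Longrightarrow> word_gens G S \<subseteq> carrier G"
  unfolding word_gens_def by auto

lemma one_in_word_gens: "\<one> \<in> word_gens G S"
  unfolding word_gens_def by simp

lemma one_in_word_ball: "\<one> \<in> word_ball G S n"
  unfolding word_ball_eq_set_pow by (rule one_in_set_pow[OF one_in_word_gens])

lemma word_ball_carrier: "S \<subseteq> carrier G \<Longrightarrow> word_ball G S n \<subseteq> carrier G"
  unfolding word_ball_eq_set_pow by (intro set_pow_carrier word_gens_carrier)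

lemma word_ball_add: "S \<subseteq> carrier G \<Longrightarrow> word_ball G S (m + n) = word_ball G S m <#> word_ball G S n"
  unfolding word_ball_eq_set_pow by (intro set_pow_add word_gens_carrier)

lemma set_pow_word_ball: "S \<subseteq> carrier G \<Longrightarrow> set_pow G (word_ball G S m) n = word_ball G S (m * n)"
  unfolding word_ball_eq_set_pow by (intro set_pow_set_pow word_gens_carrier)

lemma word_ball_mono: "S \<subseteq> carrier G \<Longrightarrow> m \<le> n \<Longrightarrow> word_ball G S m \<subseteq> word_ball G S n"
  unfolding word_ball_eq_set_pow by (intro set_pow_mono one_in_word_gens word_gens_carrier)

lemma word_gens_subset_word_ball:
  assumes "S \<subseteq> carrier G" "n \<ge> 1"
  shows "word_gens G S \<subseteq> word_ball G S n"
  using word_ball_mono[OF assms] set_pow_1[OF word_gens_carrier[OF assms(1)]]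
  unfolding word_ball_eq_set_pow by simp

lemma generate_subset_word_balls:
  assumes "S \<subseteq> carrier G"
  shows "generate G S \<subseteq> (\<Union>n. word_ball G S n)"
proof
  fix x assume "x \<in> generate G S"
  then show "x \<in> (\<Union>n. word_ball G S n)"
  proof (induction rule: generate.induct)
    case one
    show ?case using one_in_word_ball by blast
  next
    case (incl h)
    then show ?case using word_gens_subset_word_ball[OF assms order.refl] by (auto simp: word_gens_def)
  next
    case (inv h)
    then show ?case using word_gens_subset_word_ball[OF assms order.refl] by (auto simp: word_gens_def)
  next
    case (eng h1 h2)
    then obtain m n where "h1 \<in> word_ball G S m" "h2 \<in> word_ball G S n" by blast
    then have "h1 \<otimes> h2 \<in> word_ball G S (m + n)"
      unfolding word_ball_add[OF assms] set_mult_def by blast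
    then show ?case by blast
  qed
qed

lemma word_ball_stable:
  assumes "word_ball G S (Suc n) = word_ball G S n"
  shows "word_ball G S (n + k) = word_ball G S n"
proof (induction k)
  case (Suc k)
  have "word_ball G S (n + Suc k) = word_ball G S (n + k) <#> word_gens G S"
    unfolding word_ball_eq_set_pow by simp
  also have "\<dots> = word_ball G S (Suc n)"
    using Suc unfolding word_ball_eq_set_pow by simp
  finally show ?case using assms by simp
qed simp

text \<open>In an infinite group the balls grow strictly: a ball equal to the next one would already
  contain every ball, hence the whole group.\<close>
lemma card_word_ball_ge:
  assumes gen: "fin_gen_set G S" and inf: "infinite (carrier G)"
  shows "n + 1 \<le> card (word_ball G S n)"
proof -
  have S: "S \<subseteq> carrier G" "finite S" using gen unfolding fin_gen_set_def by auto
  show ?thesis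
  proof (induction n)
    case 0
    show ?case using one_in_word_ball[of S 0] finite_word_ball[OF S(2)] by (auto simp: Suc_le_eq card_gt_0_iff)
  next
    case (Suc n)
    have "word_ball G S (Suc n) \<noteq> word_ball G S n"
    proof
      assume "word_ball G S (Suc n) = word_ball G S n"
      then have "word_ball G S k \<subseteq> word_ball G S n" for k
        using word_ball_stable word_ball_mono[OF S(1), of k "n + k"] by simp
      then have "carrier G \<subseteq> word_ball G S n"
        using generate_subset_word_balls[OF S(1)] gen unfolding fin_gen_set_def by blast
      then show False using inf finite_word_ball[OF S(2)] finite_subset by blast
    qed
    then have "card (word_ball G S n) < card (word_ball G S (Suc n))"
      using word_ball_mono[OF S(1), of n "Suc n"] finite_word_ball[OF S(2)]
      by (intro psubset_card_mono) auto
    then show ?case using Suc by simp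
  qed
qed

end

text \<open>\<^const>\<open>growth_rate\<close> is defined with \<^const>\<open>lim\<close>, so it carries no information about the
  balls unless this convergence holds.\<close>
lemma (in group) tendsto_growth_rate:
  assumes "S \<subseteq> carrier G" "finite S"
  shows "(\<lambda>n. real (card (word_ball G S n)) powr (1 / n)) \<longlonglongrightarrow> growth_rate G S"
proof -
  define a where "a n = real (card (word_ball G S n))" for n
  define b where "b n = ln (a n)" for n
  have a_ge_1: "1 \<le> a n" for n
    unfolding a_def using one_in_word_ball[of S n] finite_word_ball[OF assms(2), of G n]
    by (auto simp: Suc_le_eq card_gt_0_iff)
  have a_pos: "0 < a n" for n
    using a_ge_1[of n] by linarith
  have "b (m + n) \<le> b m + b n" for m n
  proof -
    have "card (word_ball G S (m + n)) \<le> card (word_ball G S m) * card (word_ball G S n)"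
      unfolding word_ball_add[OF assms(1)] by (intro card_set_mult_le finite_word_ball assms(2))
    then have "a (m + n) \<le> a m * a n"
      unfolding a_def by (metis of_nat_le_iff of_nat_mult)
    then have "ln (a (m + n)) \<le> ln (a m * a n)"
      using a_pos[of "m + n"] a_pos[of m] a_pos[of n] by simp
    then show ?thesis
      unfolding b_def using a_pos[of m] a_pos[of n] by (simp add: ln_mult)
  qed
  moreover have "0 \<le> b n" for n
    unfolding b_def using a_ge_1 by simp
  moreover have "b 0 = 0" unfolding b_def a_def word_ball_def by simp
  ultimately have "(\<lambda>n. exp (b n / n)) \<longlonglongrightarrow> exp (INF n\<in>{1..}. b n / n)"
    by (intro tendsto_exp tendsto_subadditive_div_Inf)
  moreover have "exp (b n / n) = a n powr (1 / n)" for n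
    unfolding b_def powr_def using a_pos[of n] by simp
  ultimately show ?thesis unfolding growth_rate_def a_def by (simp add: limI)
qed

lemma eventually_card_word_ball_less:
  assumes "group G" "finitely_generated G" "\<not> uniform_exp_growth G" "c > 1"
  shows "\<exists>S. fin_gen_set G S \<and> (\<forall>\<^sub>F n in sequentially. real (card (word_ball G S n)) < c powr n)"
proof -
  have "{growth_rate G S | S. fin_gen_set G S} \<noteq> {}"
    using assms(2) unfolding finitely_generated_def by blast
  moreover have "Inf {growth_rate G S | S. fin_gen_set G S} < c"
    using assms(3,4) unfolding uniform_exp_growth_def min_growth_rate_def by simp
  ultimately have "\<exists>r \<in> {growth_rate G S | S. fin_gen_set G S}. r < c"
    by (rule cInf_lessD)
  then obtain S where S: "fin_gen_set G S" and "growth_rate G S < c"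
    by blast
  have "(\<lambda>n. real (card (word_ball G S n)) powr (1 / n)) \<longlonglongrightarrow> growth_rate G S"
    using group.tendsto_growth_rate[OF assms(1)] S unfolding fin_gen_set_def by blast
  then have "\<forall>\<^sub>F n in sequentially. real (card (word_ball G S n)) powr (1 / n) < c"
    using \<open>growth_rate G S < c\<close> by (rule order_tendstoD(2))
  moreover have "\<forall>\<^sub>F n in sequentially. 0 < n"
    by (rule eventually_gt_at_top)
  ultimately have "\<forall>\<^sub>F n in sequentially. real (card (word_ball G S n)) < c powr n"
  proof eventually_elim
    case (elim n)
    have "real (card (word_ball G S n)) = (real (card (word_ball G S n)) powr (1 / n)) powr n"
      using elim(2) by (simp add: powr_powr)
    also have "\<dots> < c powr n"
      using elim by (intro powr_less_mono2) auto
    finally show ?case .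
  qed
  with S show ?thesis by blast
qed

lemma (in group) fin_gen_set_superset:
  assumes "fin_gen_set G S" "S \<subseteq> A" "A \<subseteq> carrier G" "finite A"
  shows "fin_gen_set G A"
proof -
  have "carrier G \<subseteq> generate G A"
    using assms(1) mono_generate[OF assms(2)] unfolding fin_gen_set_def by simp
  then show ?thesis
    using assms(3,4) generate_incl[OF assms(3)] unfolding fin_gen_set_def by simp
qed

lemma (in group) fin_gen_set_word_ball:
  assumes "fin_gen_set G S" "m \<ge> 1"
  shows "fin_gen_set G (word_ball G S m)"
  using assms word_gens_subset_word_ball[of S m] word_ball_carrier[of S] finite_word_ball[of S]
  by (intro fin_gen_set_superset[OF assms(1)]) (auto simp: fin_gen_set_def word_gens_def)

lemma fin_gen_set_DirProd:
  assumes "group G" "group H"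
    and A: "fin_gen_set G A" "\<one>\<^bsub>G\<^esub> \<in> A" and B: "fin_gen_set H B" "\<one>\<^bsub>H\<^esub> \<in> B"
  shows "fin_gen_set (G \<times>\<times> H) (A \<times> B)"
proof -
  interpret G: group G by fact
  interpret H: group H by fact
  interpret GH: group "G \<times>\<times> H" using assms(1,2) by (rule DirProd_group)
  interpret inl: group_hom G "G \<times>\<times> H" "\<lambda>g. (g, \<one>\<^bsub>H\<^esub>)"
    by unfold_locales (auto simp: hom_def)
  interpret inr: group_hom H "G \<times>\<times> H" "\<lambda>h. (\<one>\<^bsub>G\<^esub>, h)"
    by unfold_locales (auto simp: hom_def)
  have "(\<lambda>g. (g, \<one>\<^bsub>H\<^esub>)) ` carrier G = generate (G \<times>\<times> H) ((\<lambda>g. (g, \<one>\<^bsub>H\<^esub>)) ` A)"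
    using A inl.generate_img unfolding fin_gen_set_def by simp
  also have "\<dots> \<subseteq> generate (G \<times>\<times> H) (A \<times> B)"
    using B by (intro GH.mono_generate) auto
  finally have inl_gen: "(g, \<one>\<^bsub>H\<^esub>) \<in> generate (G \<times>\<times> H) (A \<times> B)" if "g \<in> carrier G" for g
    using that by blast
  have "(\<lambda>h. (\<one>\<^bsub>G\<^esub>, h)) ` carrier H = generate (G \<times>\<times> H) ((\<lambda>h. (\<one>\<^bsub>G\<^esub>, h)) ` B)"
    using B inr.generate_img unfolding fin_gen_set_def by simp
  also have "\<dots> \<subseteq> generate (G \<times>\<times> H) (A \<times> B)"
    using A by (intro GH.mono_generate) auto
  finally have inr_gen: "(\<one>\<^bsub>G\<^esub>, h) \<in> generate (G \<times>\<times> H) (A \<times> B)" if "h \<in> carrier H" for h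
    using that by blast
  have "(g, h) \<in> generate (G \<times>\<times> H) (A \<times> B)" if "g \<in> carrier G" "h \<in> carrier H" for g h
    using generate.eng[OF inl_gen[OF that(1)] inr_gen[OF that(2)]] that by simp
  then have "carrier (G \<times>\<times> H) \<subseteq> generate (G \<times>\<times> H) (A \<times> B)" by auto
  moreover have "generate (G \<times>\<times> H) (A \<times> B) \<subseteq> carrier (G \<times>\<times> H)"
    using A B by (intro GH.generate_incl) (auto simp: fin_gen_set_def)
  ultimately show ?thesis using A B unfolding fin_gen_set_def by auto
qed

lemma eventually_card_word_ball_mult_less:
  assumes "group G" "finitely_generated G" "\<not> uniform_exp_growth G" "m > 0"
  shows "\<exists>S. fin_gen_set G S \<and> (\<forall>\<^sub>F n in sequentially. real (card (word_ball G S (m * n))) < 2 ^ n)"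
proof -
  obtain S where S: "fin_gen_set G S"
    and small: "\<forall>\<^sub>F k in sequentially. real (card (word_ball G S k)) < (2 powr (1 / m)) powr k"
    using eventually_card_word_ball_less[OF assms(1-3), of "2 powr (1 / m)"] assms(4) by auto
  have "\<forall>\<^sub>F n in sequentially. real (card (word_ball G S (m * n))) < (2 powr (1 / m)) powr (m * n)"
    using small mult_nat_left_at_top[OF assms(4)] by (rule eventually_compose_filterlim)
  moreover have "(2 powr (1 / m)) powr (m * n) = 2 ^ n" for n :: nat
    using assms(4) by (simp add: powr_powr powr_realpow)
  ultimately show ?thesis using S by auto
qed

lemma card_set_pow_times_word_ball_less:
  assumes "group H" "finite W" "W \<noteq> {}" "S \<subseteq> carrier H"
    and small: "real (card (word_ball H S (m * n))) < 2 ^ n"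
  shows "real (card (set_pow (G \<times>\<times> H) (W \<times> word_ball H S m) n)) < (2 * card W) ^ n"
proof -
  have "card (set_pow (G \<times>\<times> H) (W \<times> word_ball H S m) n) = card (set_pow G W n) * card (word_ball H S (m * n))"
    unfolding set_pow_DirProd group.set_pow_word_ball[OF assms(1,4)] by (rule card_cartesian_product)
  then have "real (card (set_pow (G \<times>\<times> H) (W \<times> word_ball H S m) n))
      \<le> real (card W) ^ n * card (word_ball H S (m * n))"
    using card_set_pow_le[OF assms(2), of G n] by (simp add: mult_right_mono flip: of_nat_power)
  also have "\<dots> < real (card W) ^ n * 2 ^ n"
    using small assms(2,3) by (intro mult_strict_left_mono) (auto simp: card_gt_0_iff)
  finally show ?thesis by (simp add: power_mult_distrib mult.commute)
qed

lemma eventually_power_less_powr: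
  fixes \<alpha> \<beta> c :: real
  assumes "\<alpha> > 0" "\<beta> > 0" "c \<ge> 0"
  shows "\<forall>\<^sub>F x in at_top. \<forall>n \<ge> 1. c ^ n < (\<alpha> * x) powr (\<beta> * n)"
  unfolding eventually_at_top_linorder
proof (intro exI allI impI)
  fix x :: real and n :: nat
  assume x: "x \<ge> (c + 1) powr (1 / \<beta>) / \<alpha>" and n: "n \<ge> 1"
  have \<alpha>x: "(c + 1) powr (1 / \<beta>) \<le> \<alpha> * x"
    using x assms(1) by (simp add: field_simps)
  moreover have "0 < (c + 1) powr (1 / \<beta>)"
    using assms(3) by simp
  ultimately have pos: "0 < \<alpha> * x"
    by linarith
  have "c < c + 1" by simp
  also have "c + 1 = ((c + 1) powr (1 / \<beta>)) powr \<beta>"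
    using assms by (simp add: powr_powr)
  also have "\<dots> \<le> (\<alpha> * x) powr \<beta>"
    using \<alpha>x assms(2) by (intro powr_mono2) auto
  finally have "c ^ n < ((\<alpha> * x) powr \<beta>) ^ n"
    using n assms(3) by (intro power_strict_mono) auto
  also have "\<dots> = ((\<alpha> * x) powr \<beta>) powr n"
    using pos by (subst powr_realpow) auto
  also have "\<dots> = (\<alpha> * x) powr (\<beta> * n)"
    by (simp add: powr_powr)
  finally show "c ^ n < (\<alpha> * x) powr (\<beta> * n)" .
qed

theorem proposition2p14:
  fixes H1 :: "('a, 'c) monoid_scheme" and H2 :: "('b, 'd) monoid_scheme"
  assumes "group H1" and "group H2"
    and "finitely_generated H1" and "finitely_generated H2"
    and "infinite (carrier H2)"
    and "\<not> uniform_exp_growth H2"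
    and "\<alpha> > (0::real)" and "\<beta> > (0::real)"
  shows "\<exists>U. fin_gen_set (H1 \<times>\<times> H2) U \<and>
           (\<exists>n::nat. n \<ge> 1 \<and>
              real (card (set_pow (H1 \<times>\<times> H2) U n)) < (\<alpha> * real (card U)) powr (\<beta> * real n))"
proof -
  interpret H1: group H1 by fact
  interpret H2: group H2 by fact
  obtain T where T: "fin_gen_set H1 T" using assms(3) unfolding finitely_generated_def by blast
  define W where "W = insert \<one>\<^bsub>H1\<^esub> T"
  have W: "fin_gen_set H1 W" "\<one>\<^bsub>H1\<^esub> \<in> W"
    using T H1.fin_gen_set_superset[OF T, of W] unfolding W_def fin_gen_set_def by auto
  obtain M where M: "\<And>x n. x \<ge> M \<Longrightarrow> n \<ge> 1 \<Longrightarrow> (2 * card W) ^ n < (\<alpha> * x) powr (\<beta> * n)"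
    using eventually_power_less_powr[OF assms(7,8), of "2 * card W"]
    unfolding eventually_at_top_linorder by auto
  obtain m :: nat where m: "max 1 M \<le> m" using real_arch_simple by blast
  obtain S where S: "fin_gen_set H2 S"
    and small: "\<forall>\<^sub>F n in sequentially. real (card (word_ball H2 S (m * n))) < 2 ^ n"
    using eventually_card_word_ball_mult_less[OF assms(2,4,6), of m] m by auto
  have "\<forall>\<^sub>F n in sequentially. n \<ge> 1 \<and> real (card (word_ball H2 S (m * n))) < 2 ^ n"
    using eventually_ge_at_top small by (rule eventually_conj)
  then obtain n where n: "n \<ge> 1" "real (card (word_ball H2 S (m * n))) < 2 ^ n"
    unfolding eventually_sequentially by blast
  define U where "U = W \<times> word_ball H2 S m"
  have "fin_gen_set (H1 \<times>\<times> H2) U"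
    unfolding U_def using m
    by (intro fin_gen_set_DirProd assms(1,2) W H2.fin_gen_set_word_ball S H2.one_in_word_ball) simp
  moreover have "M \<le> card U"
  proof -
    have "card (word_ball H2 S m) \<le> card U"
      unfolding U_def card_cartesian_product using W unfolding fin_gen_set_def
      by (auto simp: Suc_le_eq card_gt_0_iff)
    then show ?thesis using H2.card_word_ball_ge[OF S assms(5), of m] m by linarith
  qed
  moreover have "real (card (set_pow (H1 \<times>\<times> H2) U n)) < (2 * card W) ^ n"
    unfolding U_def using W S n(2) unfolding fin_gen_set_def
    by (intro card_set_pow_times_word_ball_less assms(2)) auto
  ultimately show ?thesis using M n(1) by (meson less_trans)
qed

end
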